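(* Let $X=\mathsf{X}_{A_0,A_1}$ be a vertex tree-shift. Then: - $X$ is uniformly strongly irreducible if and only if $X$ is uniformly block gluing; - $X$ is strongly irreducible if and only if $X$ is block gluing.
   Context: $\Sigma=\{0,1\}$. $\Sigma^*$ is the set of finite words, with $\epsilon$ the empty word. $|x|$ is the length of $x$, $\Sigma^k$ is the set of words of length $k$, and $\Sigma_n=\bigcup_{0\le k\le n}\Sigma^k$. A tree is $t:\Sigma^*\to\mathcal{A}$ with $\mathcal{A}$ finite, and we write $t_x=t(x)$. For $0$-$1$ matrices $A_0,A_1$ indexed by $\mathcal{A}$, the vertex tree-shift is $\mathsf{X}_{A_0,A_1}=\{t: A_0(t_x,t_{x0})=1,\ A_1(t_x,t_{x1})=1\ \forall x\in\Sigma^*\}$. The paper's convention is that tree-shifts of finite type are identified with vertex tree-shifts. A pattern $u$ is a map on a finite prefix-closed support $S(u)\subseteq\Sigma^*$. A pattern is accepted by $X$ if it occurs (at some node) in some $t\in X$. $B_n(X)=\{t|_{\Sigma_{n-1}}: t\in X\}$ is the set of $n$-blocks. For $w\in\Sigma^*$, $t|_{wS(v)}=v$ means $t_{wy}=v_y$ for all $y\in S(v)$. A leaf of $u$ is a $w\in S(u)$ with $w0,w1\notin S(u)$. A complete prefix code (CPC) is a finite set $P\subseteq\Sigma^*\setminus\{\epsilon\}$ such that no word of $P$ is a prefix of another, and every $x$ with $|x|\ge\max_{y\in P}|y|$ has a prefix in $P$. Patterns $u,v$ are connected through $P$ if there is $t\in X$ with $t|_{S(u)}=u$ and $t|_{wxS(v)}=v$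 for every leaf $w$ of $u$ and every $x\in P$. $X$ is: - block gluing (BG) if there is a CPC $P$ such that for every $n\ge1$ any $u,v\in B_n(X)$ are connected through $P$; - uniformly block gluing (UBG) if this holds with $P=\Sigma^k$ for some $k\ge1$; - strongly irreducible (SI) if there is a CPC $P$ through which any two patterns accepted by $X$ are connected; - uniformly strongly irreducible (USI) if this holds with $P=\Sigma^k$ for some $k\ge1$. *)

theory Defs
  imports Main "HOL-Library.Sublist"
begin

text \<open>Words over {0,1} are bool lists (False = 0, True = 1); x0 is x @ [False].
 Trees are functions bool list => 'a. Patterns are partial maps with finite
 prefix-closed domain (the support).\<close>

type_synonym 'a tree = "bool list \<Rightarrow> 'a"
type_synonym 'a pattern = "bool list \<Rightarrow> 'a option"

definition vshift :: "('a \<Rightarrow> 'a \<Rightarrow> bool) \<Rightarrow> ('a \<Rightarrow> 'a \<Rightarrow> bool) \<Rightarrow> 'a tree set" where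
  "vshift A0 A1 = {t. \<forall>x. A0 (t x) (t (x @ [False])) \<and> A1 (t x) (t (x @ [True]))}"

definition is_pattern :: "'a pattern \<Rightarrow> bool" where
  "is_pattern u \<longleftrightarrow> finite (dom u) \<and> (\<forall>x\<in>dom u. \<forall>y. prefix y x \<longrightarrow> y \<in> dom u)"

definition accepted :: "'a tree set \<Rightarrow> 'a pattern \<Rightarrow> bool" where
  "accepted X u \<longleftrightarrow> is_pattern u \<and> (\<exists>t\<in>X. \<exists>w. \<forall>y\<in>dom u. u y = Some (t (w @ y)))"

text \<open>n-blocks: restrictions of trees of X to Sigma_{n-1} = words of length < n.\<close>
definition blocks :: "'a tree set \<Rightarrow> nat \<Rightarrow> 'a pattern set" where
  "blocks X n = {(\<lambda>y. if length y < n then Some (t y) else None) | t. t \<in> X}"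

definition leaf :: "'a pattern \<Rightarrow> bool list \<Rightarrow> bool" where
  "leaf u w \<longleftrightarrow> w \<in> dom u \<and> w @ [False] \<notin> dom u \<and> w @ [True] \<notin> dom u"

definition connected_through :: "'a tree set \<Rightarrow> bool list set \<Rightarrow> 'a pattern \<Rightarrow> 'a pattern \<Rightarrow> bool" where
  "connected_through X P u v \<longleftrightarrow>
     (\<exists>t\<in>X. (\<forall>y\<in>dom u. u y = Some (t y)) \<and>
            (\<forall>w x y. leaf u w \<longrightarrow> x \<in> P \<longrightarrow> y \<in> dom v \<longrightarrow> v y = Some (t (w @ x @ y))))"

definition cpc :: "bool list set \<Rightarrow> bool" where
  "cpc P \<longleftrightarrow> finite P \<and> [] \<notin> P \<and> (\<forall>p\<in>P. \<forall>q\<in>P. p \<noteq> q \<longrightarrow> \<not> prefix p q) \<and>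
     (\<forall>x. Max (length ` P) \<le> length x \<longrightarrow> (\<exists>p\<in>P. prefix p x))"

definition block_gluing :: "'a tree set \<Rightarrow> bool" where
  "block_gluing X \<longleftrightarrow> (\<exists>P. cpc P \<and>
     (\<forall>n\<ge>1. \<forall>u\<in>blocks X n. \<forall>v\<in>blocks X n. connected_through X P u v))"

definition uniformly_block_gluing :: "'a tree set \<Rightarrow> bool" where
  "uniformly_block_gluing X \<longleftrightarrow> (\<exists>k\<ge>1.
     (\<forall>n\<ge>1. \<forall>u\<in>blocks X n. \<forall>v\<in>blocks X n. connected_through X {x. length x = k} u v))"

definition strongly_irreducible :: "'a tree set \<Rightarrow> bool" where
  "strongly_irreducible X \<longleftrightarrow> (\<exists>P. cpc P \<and>
     (\<forall>u v. accepted X u \<longrightarrow> accepted X v \<longrightarrow> connected_through X P u v))"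

definition uniformly_strongly_irreducible :: "'a tree set \<Rightarrow> bool" where
  "uniformly_strongly_irreducible X \<longleftrightarrow> (\<exists>k\<ge>1.
     (\<forall>u v. accepted X u \<longrightarrow> accepted X v \<longrightarrow> connected_through X {x. length x = k} u v))"

end

theory Submission
  imports Defs
begin

text \<open>A vertex tree-shift is Markov: the admissibility of a tree is checked edge by edge, so
  the subtrees of a tree of \<open>X\<close> rooted at a prefix-free set of nodes may be replaced by
  arbitrary trees of \<open>X\<close> carrying the same root symbols. Consequently gluing two patterns
  through \<open>P\<close> reduces to gluing two single symbols through \<open>P\<close>, which is the case \<open>n = 1\<close> of
  block gluing: above each leaf of the first pattern we graft a tree that starts with the
  leaf symbol and carries the root symbol of the second pattern at every node of \<open>P\<close>, and
  below those nodes we graft the second pattern.\<close>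

definition prefix_free :: "'b list set \<Rightarrow> bool" where
  "prefix_free Q \<longleftrightarrow> (\<forall>p\<in>Q. \<forall>q\<in>Q. p \<noteq> q \<longrightarrow> \<not> prefix p q)"

definition graft :: "'a tree \<Rightarrow> bool list set \<Rightarrow> (bool list \<Rightarrow> 'a tree) \<Rightarrow> 'a tree" where
  "graft t Q f y = (if \<exists>q\<in>Q. prefix q y
      then f (SOME q. q \<in> Q \<and> prefix q y) (drop (length (SOME q. q \<in> Q \<and> prefix q y)) y)
      else t y)"

lemma prefix_free_prefix_unique:
  assumes "prefix_free Q" "q \<in> Q" "q' \<in> Q" "prefix q y" "prefix q' y"
  shows "q = q'"
  using assms prefix_same_cases unfolding prefix_free_def by metis

lemma prefix_free_words_of_length: "prefix_free {x::'b list. length x = k}"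
  unfolding prefix_free_def by (auto simp: prefix_def)

lemma cpc_prefix_free: "cpc P \<Longrightarrow> prefix_free P"
  unfolding cpc_def prefix_free_def by blast

lemma graft_at:
  assumes "prefix_free Q" "q \<in> Q"
  shows "graft t Q f (q @ z) = f q z"
proof -
  have "\<exists>q'. q' \<in> Q \<and> prefix q' (q @ z)" using assms by auto
  then have "(SOME q'. q' \<in> Q \<and> prefix q' (q @ z)) = q"
    using prefix_free_prefix_unique[OF assms(1) _ assms(2)] by (metis (no_types, lifting) prefixI someI_ex)
  then show ?thesis unfolding graft_def using assms(2) by auto
qed

lemma graft_outside:
  assumes "\<not> (\<exists>q\<in>Q. prefix q y)"
  shows "graft t Q f y = t y"
  using assms unfolding graft_def by auto

lemma graft_eq_off_strict_subtrees:
  assumes "prefix_free Q" "\<And>q. q \<in> Q \<Longrightarrow> f q [] = t q"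
    and "\<And>q. q \<in> Q \<Longrightarrow> prefix q y \<Longrightarrow> q = y"
  shows "graft t Q f y = t y"
proof (cases "\<exists>q\<in>Q. prefix q y")
  case True
  then obtain q where "q \<in> Q" "prefix q y" by blast
  with assms show ?thesis using graft_at[OF assms(1), of y t f "[]"] by auto
qed (rule graft_outside)

lemma vshift_iff:
  "t \<in> vshift A0 A1 \<longleftrightarrow> (\<forall>x b. (if b then A1 else A0) (t x) (t (x @ [b])))"
  unfolding vshift_def by (auto split: if_splits)

lemma subtree_in_vshift:
  assumes "t \<in> vshift A0 A1"
  shows "(\<lambda>y. t (z @ y)) \<in> vshift A0 A1"
  using assms unfolding vshift_def by (auto, metis append.assoc, metis append.assoc)

lemma graft_in_vshift:
  assumes t: "t \<in> vshift A0 A1" and Q: "prefix_free Q"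
    and f: "\<And>q. q \<in> Q \<Longrightarrow> f q \<in> vshift A0 A1" "\<And>q. q \<in> Q \<Longrightarrow> f q [] = t q"
  shows "graft t Q f \<in> vshift A0 A1"
  unfolding vshift_iff
proof (intro allI)
  fix x and b :: bool
  let ?g = "graft t Q f" and ?A = "if b then A1 else A0"
  show "?A (?g x) (?g (x @ [b]))"
  proof (cases "\<exists>q\<in>Q. prefix q x")
    case True
    then obtain q z where q: "q \<in> Q" "x = q @ z" by (auto simp: prefix_def)
    have "?g x = f q z" "?g (x @ [b]) = f q (z @ [b])"
      using graft_at[OF Q q(1)] q(2) by (metis, simp)
    then show ?thesis using f(1)[OF q(1)] unfolding vshift_iff by simp
  next
    case False
    then have "?g x = t x" by (rule graft_outside)
    moreover have "?g (x @ [b]) = t (x @ [b])"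
      using False by (intro graft_eq_off_strict_subtrees[of Q f t, OF Q f(2)])
        (auto simp: prefix_Cons prefix_snoc)
    ultimately show ?thesis using t unfolding vshift_iff by simp
  qed
qed

lemma leaf_prefix_in_dom:
  assumes "is_pattern u" "leaf u w" "prefix w y" "y \<in> dom u"
  shows "y = w"
proof (rule ccontr)
  assume "y \<noteq> w"
  then obtain c r where "y = w @ c # r" using assms(3) by (metis append_Nil2 neq_Nil_conv prefix_def)
  then have "w @ [c] \<in> dom u" using assms(1,4) unfolding is_pattern_def by (metis prefixI append.assoc append_Cons append_Nil)
  then show False using assms(2) by (cases c) (auto simp: leaf_def)
qed

lemma prefix_free_leaves:
  assumes "is_pattern u"
  shows "prefix_free {w. leaf u w}"
  unfolding prefix_free_def using leaf_prefix_in_dom[OF assms] by (auto simp: leaf_def)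

lemma accepted_block:
  assumes "u \<in> blocks X n"
  shows "accepted X u"
proof -
  obtain t where t: "t \<in> X" "u = (\<lambda>y. if length y < n then Some (t y) else None)"
    using assms unfolding blocks_def by blast
  have dom: "dom u = {y. length y < n}" using t by (auto split: if_splits)
  have "finite {y::bool list. length y < n}"
    by (rule finite_subset[OF _ finite_lists_length_le[of UNIV n]]) auto
  then have "is_pattern u"
    unfolding is_pattern_def dom by (auto dest: prefix_length_le)
  then show ?thesis
    unfolding accepted_def using t by (intro conjI bexI[of _ t] exI[of _ "[]"]) (auto split: if_splits)
qed

definition root_block :: "'a tree \<Rightarrow> 'a pattern" where
  "root_block t = (\<lambda>y. if length y < 1 then Some (t y) else None)"

lemma root_bridge:
  assumes glue: "\<forall>u\<in>blocks X 1. \<forall>v\<in>blocks X 1. connected_through X P u v"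
    and "t1 \<in> X" "t2 \<in> X"
  shows "\<exists>s\<in>X. s [] = t1 [] \<and> (\<forall>x\<in>P. s x = t2 [])"
proof -
  have "root_block t1 \<in> blocks X 1" "root_block t2 \<in> blocks X 1"
    using assms(2,3) unfolding root_block_def blocks_def by blast+
  with glue obtain s where s: "s \<in> X" "\<forall>y\<in>dom (root_block t1). root_block t1 y = Some (s y)"
    "\<forall>w x y. leaf (root_block t1) w \<longrightarrow> x \<in> P \<longrightarrow> y \<in> dom (root_block t2) \<longrightarrow>
       root_block t2 y = Some (s (w @ x @ y))"
    unfolding connected_through_def by blast
  have "leaf (root_block t1) []" "[] \<in> dom (root_block t1)" "[] \<in> dom (root_block t2)"
    unfolding leaf_def root_block_def by auto
  then have "root_block t1 [] = Some (s [])" "\<forall>x\<in>P. root_block t2 [] = Some (s x)"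
    using s(2,3) by (blast, metis append.left_neutral append_Nil2)
  then show ?thesis using s(1) unfolding root_block_def by auto
qed

lemma bridge_to_subtree:
  assumes X: "X = vshift A0 A1" and P: "prefix_free P"
    and bridge: "\<forall>t1\<in>X. \<forall>t2\<in>X. \<exists>s\<in>X. s [] = t1 [] \<and> (\<forall>x\<in>P. s x = t2 [])"
    and "t1 \<in> X" "t2 \<in> X"
  shows "\<exists>t\<in>X. t [] = t1 [] \<and> (\<forall>x\<in>P. \<forall>y. t (x @ y) = t2 y)"
proof -
  obtain s where s: "s \<in> X" "s [] = t1 []" "\<forall>x\<in>P. s x = t2 []"
    using bridge assms(4,5) by blast
  let ?t = "graft s P (\<lambda>_. t2)"
  have "?t \<in> X" using graft_in_vshift[of s A0 A1 P "\<lambda>_. t2"] P s assms(5) X by auto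
  moreover have "?t [] = t1 []"
    using graft_eq_off_strict_subtrees[OF P, of "\<lambda>_. t2" s "[]"] s by auto
  moreover have "\<forall>x\<in>P. \<forall>y. ?t (x @ y) = t2 y" using graft_at[OF P] by blast
  ultimately show ?thesis by blast
qed

lemma connected_through_if_bridges:
  assumes X: "X = vshift A0 A1" and P: "prefix_free P"
    and bridge: "\<forall>t1\<in>X. \<forall>t2\<in>X. \<exists>s\<in>X. s [] = t1 [] \<and> (\<forall>x\<in>P. s x = t2 [])"
    and "accepted X u" "accepted X v"
  shows "connected_through X P u v"
proof -
  obtain t1 w1 where t1: "t1 \<in> X" "\<forall>y\<in>dom u. u y = Some (t1 (w1 @ y))" and u: "is_pattern u"
    using assms(4) unfolding accepted_def by blast
  obtain t2 w2 where t2: "t2 \<in> X" "\<forall>y\<in>dom v. v y = Some (t2 (w2 @ y))"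
    using assms(5) unfolding accepted_def by blast
  define tu where "tu = (\<lambda>y. t1 (w1 @ y))"
  define tv where "tv = (\<lambda>y. t2 (w2 @ y))"
  have tu: "tu \<in> X" and tv: "tv \<in> X" and tu_sub: "\<And>w. (\<lambda>y. tu (w @ y)) \<in> X"
    using t1 t2 X subtree_in_vshift unfolding tu_def tv_def by blast+
  have "\<forall>w. \<exists>g\<in>X. g [] = tu w \<and> (\<forall>x\<in>P. \<forall>y. g (x @ y) = tv y)"
  proof
    fix w
    show "\<exists>g\<in>X. g [] = tu w \<and> (\<forall>x\<in>P. \<forall>y. g (x @ y) = tv y)"
      using bridge_to_subtree[of X A0 A1 P "\<lambda>y. tu (w @ y)" tv, OF X P bridge] tu_sub tv by simp
  qed
  then obtain g where g: "\<And>w. g w \<in> X" "\<And>w. g w [] = tu w"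
    "\<And>w x y. x \<in> P \<Longrightarrow> g w (x @ y) = tv y"
    by metis
  let ?L = "{w. leaf u w}"
  have L: "prefix_free ?L" by (rule prefix_free_leaves[OF u])
  let ?T = "graft tu ?L g"
  have "?T \<in> X" using graft_in_vshift[of tu A0 A1 ?L g] L tu g(1,2) X by auto
  moreover have "u y = Some (?T y)" if "y \<in> dom u" for y
  proof -
    have "?T y = tu y"
      using graft_eq_off_strict_subtrees[OF L, of g tu y] leaf_prefix_in_dom[OF u _ _ that] g(2)
      by (metis mem_Collect_eq)
    then show ?thesis using t1(2) that unfolding tu_def by simp
  qed
  moreover have "v y = Some (?T (w @ x @ y))" if "leaf u w" "x \<in> P" "y \<in> dom v" for w x y
    using graft_at[OF L, of w tu g "x @ y"] g(3) t2(2) that unfolding tv_def by simp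
  ultimately show ?thesis unfolding connected_through_def by blast
qed

lemma vshift_connected_accepted_iff_blocks:
  assumes X: "X = vshift A0 A1" and P: "prefix_free P"
  shows "(\<forall>u v. accepted X u \<longrightarrow> accepted X v \<longrightarrow> connected_through X P u v)
    \<longleftrightarrow> (\<forall>n\<ge>1. \<forall>u\<in>blocks X n. \<forall>v\<in>blocks X n. connected_through X P u v)"
proof
  assume "\<forall>n\<ge>1. \<forall>u\<in>blocks X n. \<forall>v\<in>blocks X n. connected_through X P u v"
  then have "\<forall>u\<in>blocks X 1. \<forall>v\<in>blocks X 1. connected_through X P u v" by blast
  then show "\<forall>u v. accepted X u \<longrightarrow> accepted X v \<longrightarrow> connected_through X P u v"
    using connected_through_if_bridges[OF X P] root_bridge by blast
qed (use accepted_block in blast)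

theorem theorem3p6:
  fixes A0 A1 :: "'a::finite \<Rightarrow> 'a \<Rightarrow> bool"
  shows "(uniformly_strongly_irreducible (vshift A0 A1) \<longleftrightarrow> uniformly_block_gluing (vshift A0 A1))
       \<and> (strongly_irreducible (vshift A0 A1) \<longleftrightarrow> block_gluing (vshift A0 A1))"
  using vshift_connected_accepted_iff_blocks[OF refl prefix_free_words_of_length]
    vshift_connected_accepted_iff_blocks[OF refl cpc_prefix_free]
  unfolding uniformly_strongly_irreducible_def uniformly_block_gluing_def
    strongly_irreducible_def block_gluing_def
  by blast

end
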